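(* Consider a dynamical system $\dot{x} = F(x)$, $x \in \mathbb{R}^n$, with $F$ locally Lipschitz, where the state is partitioned as $x = (x_1^T, x_2^T, \dots, x_m^T)^T$ with $x_i \in \mathbb{R}^{n_i}$ and $\sum_{i=1}^m n_i = n$. For each $i \in \{1,\dots,m\}$ let $v_i : \mathbb{R}^{n_i} \to \mathbb{R}$ be a continuously differentiable positive definite function (a Lyapunov function: $v_i(0)=0$ and $v_i(x_i) > 0$ for $x_i \neq 0$), and let $v(x) = (v_1(x_1), \dots, v_m(x_m))^T$. Let $\mathcal{D} \subseteq \mathbb{R}^n$ be a domain. Suppose there is a matrix $\tilde{A} = [\tilde{a}_{ij}] \in \mathbb{R}^{m \times m}$ with $\tilde{a}_{ij} \geq 0$ for all $i \neq j$ and $\sum_{j=1}^m \tilde{a}_{ij} < 0$ for all $i$, such that $$\dot{v}(x) \leq \tilde{A}\, v(x) \quad \text{(componentwise) for all } x \in \mathcal{D},$$ where $\dot{v}_i(x) = \nabla v_i(x_i)^T F_i(x)$ denotes the derivative of $v_i$ along the dynamics and $F_i$ is the block of $F$ corresponding to $x_i$. Define $V_i := v_i^2$ for each $i$ and $V(x) = (V_1(x_1), \dots, V_m(x_m))^T$. Then there exists a matrix $A = [a_{ij}] \in \mathbb{R}^{m\times m}$ such that $$\dot{V}(x) \leq A\, V(x) \quad \text{(componentwise) for all } x \in \mathcal{D},$$ with $a_{ij} \geq 0$ for all $i \neq j$ and $\sum_{j=1}^m a_{ij} < \sum_{j=1}^m \tilde{a}_{ij} < 0$ for all $i$.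
   Context: Inequalities between vectors are understood componentwise. $\nabla v_i$ denotes the gradient of $v_i$ with respect to $x_i$, and $\dot{V}_i(x) = \nabla V_i(x_i)^T F_i(x)$ is the derivative of $V_i$ along trajectories of $\dot{x}=F(x)$. *)

theory Defs
  imports "HOL-Analysis.Analysis"
begin

text \<open>State space R^n = real^'n; blocks indexed by the finite type 'm via blk :: 'n => 'm
  (coordinate k belongs to block blk k). The block x_i is represented inside R^n as the
  vector keeping the coordinates of block i and zeroing the others.\<close>

definition blockproj :: "('n::finite \<Rightarrow> 'm) \<Rightarrow> 'm \<Rightarrow> real^'n \<Rightarrow> real^'n" where
  "blockproj blk i x = (\<chi> k. if blk k = i then x $ k else 0)"

definition locally_lipschitz :: "(real^'n::finite \<Rightarrow> real^'n) \<Rightarrow> bool" where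
  "locally_lipschitz F \<longleftrightarrow> (\<forall>x. \<exists>e>0. \<exists>L. L-lipschitz_on (cball x e) F)"

definition C1_fun :: "(real^'n::finite \<Rightarrow> real) \<Rightarrow> bool" where
  "C1_fun f \<longleftrightarrow> (\<exists>f'. (\<forall>y. (f has_derivative blinfun_apply (f' y)) (at y)) \<and> continuous_on UNIV f')"

definition orbital_deriv ::
  "('n::finite \<Rightarrow> 'm) \<Rightarrow> (real^'n \<Rightarrow> real^'n) \<Rightarrow> 'm \<Rightarrow> (real^'n \<Rightarrow> real) \<Rightarrow> real^'n \<Rightarrow> real" where
  "orbital_deriv blk F i w x =
     frechet_derivative w (at (blockproj blk i x)) (blockproj blk i (F x))"

end

theory Submission
  imports Defs
begin

text \<open>Along trajectories \<open>(v\<^sub>i\<^sup>2)' = 2 v\<^sub>i v\<^sub>i' \<le> 2 v\<^sub>i \<Sum>\<^sub>j \<tilde>a\<^sub>i\<^sub>j v\<^sub>j\<close>, using \<open>v\<^sub>i \<ge> 0\<close>.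
  Each cross term is bounded by AM-GM, \<open>2 \<tilde>a\<^sub>i\<^sub>j v\<^sub>i v\<^sub>j \<le> \<tilde>a\<^sub>i\<^sub>j (v\<^sub>i\<^sup>2 + v\<^sub>j\<^sup>2)\<close>
  since \<open>\<tilde>a\<^sub>i\<^sub>j \<ge> 0\<close>, which moves half of every off-diagonal weight onto the diagonal.
  The resulting matrix keeps the off-diagonal entries of \<open>\<tilde>A\<close> and has row sums
  \<open>2 \<Sum>\<^sub>j \<tilde>a\<^sub>i\<^sub>j < \<Sum>\<^sub>j \<tilde>a\<^sub>i\<^sub>j < 0\<close>. The argument is pointwise in \<open>x\<close>.\<close>

lemma blockproj_idem [simp]: "blockproj blk i (blockproj blk i x) = blockproj blk i x"
  by (simp add: blockproj_def vec_eq_iff)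

lemma nonneg_on_blocks:
  fixes w :: "real^'n::finite \<Rightarrow> real"
  assumes "w 0 = 0" and "\<And>y. blockproj blk i y = y \<Longrightarrow> y \<noteq> 0 \<Longrightarrow> w y > 0"
  shows "w (blockproj blk i x) \<ge> 0"
proof (cases "blockproj blk i x = 0")
  case False
  then show ?thesis
    using assms(2)[of "blockproj blk i x"] by (simp add: less_imp_le)
qed (simp add: assms(1))

lemma C1_fun_differentiable: "C1_fun f \<Longrightarrow> f differentiable at x"
  unfolding C1_fun_def differentiable_def by blast

lemma orbital_deriv_power2:
  assumes "w differentiable at (blockproj blk i x)"
  shows "orbital_deriv blk F i (\<lambda>y. (w y)^2) x
           = 2 * w (blockproj blk i x) * orbital_deriv blk F i w x"
proof -
  let ?p = "blockproj blk i x" and ?w' = "frechet_derivative w (at (blockproj blk i x))"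
  have "(w has_derivative ?w') (at ?p)"
    using assms frechet_derivative_works by blast
  then have "((\<lambda>y. (w y)^2) has_derivative (\<lambda>h. of_nat 2 * ?w' h * w ?p ^ (2 - 1))) (at ?p)"
    by (rule has_derivative_power)
  then have "frechet_derivative (\<lambda>y. (w y)^2) (at ?p) = (\<lambda>h. 2 * ?w' h * w ?p)"
    by (auto dest: frechet_derivative_at)
  then show ?thesis
    unfolding orbital_deriv_def by (simp add: mult_ac)
qed

definition squared_comparison_matrix :: "real^'m^'m \<Rightarrow> real^'m^'m::finite" where
  "squared_comparison_matrix A =
     (\<chi> i j. if j = i then 2 * A$i$i + (\<Sum>k\<in>UNIV-{i}. A$i$k) else A$i$j)"

lemma squared_comparison_matrix_offdiag:
  "j \<noteq> i \<Longrightarrow> squared_comparison_matrix A $ i $ j = A $ i $ j"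
  by (simp add: squared_comparison_matrix_def)

lemma squared_comparison_matrix_row_sum:
  "(\<Sum>j\<in>UNIV. squared_comparison_matrix A $ i $ j) = 2 * (\<Sum>j\<in>UNIV. A $ i $ j)"
  by (simp add: squared_comparison_matrix_def sum.remove[of UNIV i])

lemma times_matrix_vector_le_squared_comparison:
  fixes A :: "real^'m^'m::finite" and w :: "real^'m"
  assumes offdiag: "\<And>j. j \<noteq> i \<Longrightarrow> A $ i $ j \<ge> 0"
  shows "2 * w$i * (A *v w)$i \<le> (squared_comparison_matrix A *v (\<chi> j. (w$j)^2)) $ i"
proof -
  have "2 * w$i * (A *v w)$i = 2 * A$i$i * (w$i)^2 + (\<Sum>j\<in>UNIV-{i}. 2 * A$i$j * w$i * w$j)"
    by (simp add: matrix_vector_mult_def sum.remove[of UNIV i] sum_distrib_left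
        algebra_simps power2_eq_square)
  also have "\<dots> \<le> 2 * A$i$i * (w$i)^2 + (\<Sum>j\<in>UNIV-{i}. A$i$j * (w$i)^2 + A$i$j * (w$j)^2)"
  proof (intro add_left_mono sum_mono)
    fix j assume "j \<in> UNIV - {i}"
    then have "0 \<le> A$i$j * (w$i - w$j)^2"
      using offdiag by simp
    then show "2 * A$i$j * w$i * w$j \<le> A$i$j * (w$i)^2 + A$i$j * (w$j)^2"
      by (simp add: power2_eq_square algebra_simps)
  qed
  also have "\<dots> = (squared_comparison_matrix A *v (\<chi> j. (w$j)^2)) $ i"
    by (simp add: squared_comparison_matrix_def matrix_vector_mult_def sum.remove[of UNIV i]
        sum.distrib sum_distrib_right[symmetric] algebra_simps)
  finally show ?thesis .
qed

theorem lemma2: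
  fixes F :: "real^'n \<Rightarrow> real^'n"
    and blk :: "'n \<Rightarrow> 'm::finite"
    and v :: "'m \<Rightarrow> real^'n \<Rightarrow> real"
    and D :: "(real^'n) set"
    and At :: "real^'m^'m"
  assumes lip: "locally_lipschitz F"
    and blocks: "surj blk"
    and C1: "\<And>i. C1_fun (v i)"
    and v0: "\<And>i. v i 0 = 0"
    and vpos: "\<And>i y. blockproj blk i y = y \<Longrightarrow> y \<noteq> 0 \<Longrightarrow> v i y > 0"
    and dom: "open D" "connected D" "D \<noteq> {}"
    and offdiag: "\<And>i j. i \<noteq> j \<Longrightarrow> At $ i $ j \<ge> 0"
    and rowsum: "\<And>i. (\<Sum>j\<in>UNIV. At $ i $ j) < 0"
    and ineq: "\<And>x i. x \<in> D \<Longrightarrow>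
        orbital_deriv blk F i (v i) x \<le> (At *v (\<chi> j. v j (blockproj blk j x))) $ i"
  shows "\<exists>A :: real^'m^'m.
     (\<forall>x\<in>D. \<forall>i. orbital_deriv blk F i (\<lambda>y. (v i y)^2) x
                 \<le> (A *v (\<chi> j. (v j (blockproj blk j x))^2)) $ i)
   \<and> (\<forall>i j. i \<noteq> j \<longrightarrow> A $ i $ j \<ge> 0)
   \<and> (\<forall>i. (\<Sum>j\<in>UNIV. A $ i $ j) < (\<Sum>j\<in>UNIV. At $ i $ j)
          \<and> (\<Sum>j\<in>UNIV. At $ i $ j) < 0)"
proof (intro exI[of _ "squared_comparison_matrix At"] conjI ballI allI impI)
  fix x i assume "x \<in> D"
  let ?w = "\<chi> j. v j (blockproj blk j x)"
  have "orbital_deriv blk F i (\<lambda>y. (v i y)^2) x = 2 * ?w$i * orbital_deriv blk F i (v i) x"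
    by (simp add: orbital_deriv_power2 C1_fun_differentiable C1)
  also have "\<dots> \<le> 2 * ?w$i * (At *v ?w)$i"
    using ineq[OF \<open>x \<in> D\<close>] nonneg_on_blocks[of "v i" blk i, OF v0 vpos] by (simp add: mult_left_mono)
  also have "\<dots> \<le> (squared_comparison_matrix At *v (\<chi> j. (?w$j)^2)) $ i"
    using offdiag by (intro times_matrix_vector_le_squared_comparison) auto
  finally show "orbital_deriv blk F i (\<lambda>y. (v i y)^2) x
      \<le> (squared_comparison_matrix At *v (\<chi> j. (v j (blockproj blk j x))^2)) $ i"
    by simp
qed (use offdiag rowsum in \<open>auto simp: squared_comparison_matrix_offdiag
      squared_comparison_matrix_row_sum\<close>)

end
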